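(* Let $\Gamma$ be a group such that the comparison map $H^2_b(\Gamma,\mathbb R)\to H^2(\Gamma,\mathbb R)$ is not injective. Then $\mathrm{def}^{(1)}(\Gamma)\ge\sqrt3$; in particular $\Gamma$ is not Ulam stable.
   Context: For maps $\mu,\nu:\Gamma\to U(n)$: $\|\mu-\nu\|=\sup_\gamma\|\mu(\gamma)-\nu(\gamma)\|$ (operator norm), $D(\mu)=\inf\{\|\mu-\nu\|:\nu\in\mathrm{Hom}(\Gamma,U(n))\}$, $\mathrm{def}(\mu)=\sup_{x,y}\|\mu(xy)-\mu(x)\mu(y)\|$. $F^{(n)}_\Gamma(\delta)=\sup\{D(\mu):\mathrm{def}(\mu)\le\delta,\mu(e)=\mathrm{Id}\}$ over maps $\mu:\Gamma\to U(n)$; $\mathrm{def}^{(n)}(\Gamma)=\lim_{\delta\to0^+}F^{(n)}_\Gamma(\delta)$. $F^{fd}_\Gamma$ and $\mathrm{def}^{fd}(\Gamma)$ are defined the same way with the supremum over all finite dimensions; $\Gamma$ is Ulam stable if $\mathrm{def}^{fd}(\Gamma)=0$. *)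

theory Defs
  imports "HOL-Algebra.Group" "Jordan_Normal_Form.Matrix"
begin

definition vnorm :: "complex vec \<Rightarrow> real" where
  "vnorm x = sqrt (\<Sum>i<dim_vec x. (cmod (x $ i))^2)"

definition opnorm :: "nat \<Rightarrow> complex mat \<Rightarrow> real" where
  "opnorm n A = Sup {vnorm (A *\<^sub>v x) | x. x \<in> carrier_vec n \<and> vnorm x = 1}"

definition unitary_group :: "nat \<Rightarrow> complex mat set" where
  "unitary_group n = {U. U \<in> carrier_mat n n \<and> U * map_mat cnj (transpose_mat U) = 1\<^sub>m n}"

definition unitary_homs :: "('g, 'b) monoid_scheme \<Rightarrow> nat \<Rightarrow> ('g \<Rightarrow> complex mat) set" where
  "unitary_homs G n = {\<nu>. \<nu> \<in> carrier G \<rightarrow> unitary_group n \<and>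
     (\<forall>x\<in>carrier G. \<forall>y\<in>carrier G. \<nu> (x \<otimes>\<^bsub>G\<^esub> y) = \<nu> x * \<nu> y)}"

definition map_dist :: "('g, 'b) monoid_scheme \<Rightarrow> nat \<Rightarrow> ('g \<Rightarrow> complex mat) \<Rightarrow> ('g \<Rightarrow> complex mat) \<Rightarrow> real" where
  "map_dist G n \<mu> \<nu> = Sup {opnorm n (\<mu> g - \<nu> g) | g. g \<in> carrier G}"

definition dist_to_homs :: "('g, 'b) monoid_scheme \<Rightarrow> nat \<Rightarrow> ('g \<Rightarrow> complex mat) \<Rightarrow> real" where
  "dist_to_homs G n \<mu> = Inf {map_dist G n \<mu> \<nu> | \<nu>. \<nu> \<in> unitary_homs G n}"

definition map_defect :: "('g, 'b) monoid_scheme \<Rightarrow> nat \<Rightarrow> ('g \<Rightarrow> complex mat) \<Rightarrow> real" where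
  "map_defect G n \<mu> = Sup {opnorm n (\<mu> (x \<otimes>\<^bsub>G\<^esub> y) - \<mu> x * \<mu> y) | x y. x \<in> carrier G \<and> y \<in> carrier G}"

definition admissible_maps :: "('g, 'b) monoid_scheme \<Rightarrow> nat \<Rightarrow> real \<Rightarrow> ('g \<Rightarrow> complex mat) set" where
  "admissible_maps G n \<delta> = {\<mu>. \<mu> \<in> carrier G \<rightarrow> unitary_group n \<and> map_defect G n \<mu> \<le> \<delta>
      \<and> \<mu> \<one>\<^bsub>G\<^esub> = 1\<^sub>m n}"

definition F_n :: "('g, 'b) monoid_scheme \<Rightarrow> nat \<Rightarrow> real \<Rightarrow> real" where
  "F_n G n \<delta> = Sup (dist_to_homs G n ` admissible_maps G n \<delta>)"

definition def_n :: "('g, 'b) monoid_scheme \<Rightarrow> nat \<Rightarrow> real" where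
  "def_n G n = Lim (at_right 0) (F_n G n)"

definition F_fd :: "('g, 'b) monoid_scheme \<Rightarrow> real \<Rightarrow> real" where
  "F_fd G \<delta> = Sup (\<Union>n\<in>{1..}. dist_to_homs G n ` admissible_maps G n \<delta>)"

definition def_fd :: "('g, 'b) monoid_scheme \<Rightarrow> real" where
  "def_fd G = Lim (at_right 0) (F_fd G)"

definition ulam_stable :: "('g, 'b) monoid_scheme \<Rightarrow> bool" where
  "ulam_stable G \<longleftrightarrow> def_fd G = 0"

section \<open>Degree-2 comparison map H^2_b(G,R) -> H^2(G,R) (inhomogeneous cochains, trivial coefficients)\<close>

definition cocycle2 :: "('g, 'b) monoid_scheme \<Rightarrow> ('g \<Rightarrow> 'g \<Rightarrow> real) \<Rightarrow> bool" where
  "cocycle2 G c \<longleftrightarrow> (\<forall>g1\<in>carrier G. \<forall>g2\<in>carrier G. \<forall>g3\<in>carrier G.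
     c g2 g3 - c (g1 \<otimes>\<^bsub>G\<^esub> g2) g3 + c g1 (g2 \<otimes>\<^bsub>G\<^esub> g3) - c g1 g2 = 0)"

definition coboundary1 :: "('g, 'b) monoid_scheme \<Rightarrow> ('g \<Rightarrow> real) \<Rightarrow> 'g \<Rightarrow> 'g \<Rightarrow> real" where
  "coboundary1 G f g h = f h - f (g \<otimes>\<^bsub>G\<^esub> h) + f g"

definition bounded_cochain1 :: "('g, 'b) monoid_scheme \<Rightarrow> ('g \<Rightarrow> real) \<Rightarrow> bool" where
  "bounded_cochain1 G f \<longleftrightarrow> (\<exists>B. \<forall>g\<in>carrier G. \<bar>f g\<bar> \<le> B)"

definition bounded_cochain2 :: "('g, 'b) monoid_scheme \<Rightarrow> ('g \<Rightarrow> 'g \<Rightarrow> real) \<Rightarrow> bool" where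
  "bounded_cochain2 G c \<longleftrightarrow> (\<exists>B. \<forall>g\<in>carrier G. \<forall>h\<in>carrier G. \<bar>c g h\<bar> \<le> B)"

definition is_coboundary_of :: "('g, 'b) monoid_scheme \<Rightarrow> ('g \<Rightarrow> 'g \<Rightarrow> real) \<Rightarrow> ('g \<Rightarrow> real) \<Rightarrow> bool" where
  "is_coboundary_of G c f \<longleftrightarrow> (\<forall>g\<in>carrier G. \<forall>h\<in>carrier G. c g h = coboundary1 G f g h)"

text \<open>The comparison map [c]_b |-> [c] is not injective: some bounded 2-cocycle is
  the coboundary of a 1-cochain, but not of a bounded 1-cochain.\<close>
definition comparison2_not_injective :: "('g, 'b) monoid_scheme \<Rightarrow> bool" where
  "comparison2_not_injective G \<longleftrightarrow> (\<exists>c. cocycle2 G c \<and> bounded_cochain2 G c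
     \<and> (\<exists>f. is_coboundary_of G c f)
     \<and> \<not> (\<exists>f. bounded_cochain1 G f \<and> is_coboundary_of G c f))"

end

theory Submission
  imports Defs "Jordan_Normal_Form.Determinant"
begin

(*
  A non-injective comparison map H^2_b(G) -> H^2(G) yields a nontrivial quasimorphism F
  of G: F has bounded defect but is not a bounded perturbation of a homomorphism.  For
  small c > 0 the map  g |-> cis(c F(g))  into U(1) has defect at most c*D, as small as
  we like.  If it were uniformly within s < sqrt 3 of a character z of G, then
  z(g) = cis(phi(g)) with |c F(g) - phi(g)| <= arccos(1 - s^2/2) < 2 pi/3; the defect of
  phi is then a multiple of 2 pi of absolute value below 2 pi, so phi is additive and
  c F would be trivial -- a contradiction.  Hence F^(1)(delta) >= sqrt 3 for all delta > 0,
  and passing to the limit delta -> 0+ gives def^(1) >= sqrt 3 and def^fd >= sqrt 3.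
*)

lemma vnorm_sq: "(vnorm x)^2 = (\<Sum>i<dim_vec x. (cmod (x $ i))^2)"
  unfolding vnorm_def by (rule real_sqrt_pow2, rule sum_nonneg, simp)

lemma vnorm_ge0: "vnorm x \<ge> 0"
  unfolding vnorm_def by (simp add: sum_nonneg)

lemma unitary_iso:
  assumes U: "U \<in> unitary_group n" and x: "x \<in> carrier_vec n"
  shows "vnorm (U *\<^sub>v x) = vnorm x"
proof -
  let ?V = "map_mat cnj (transpose_mat U)"
  have Uc: "U \<in> carrier_mat n n" and UV: "U * ?V = 1\<^sub>m n"
    using U unfolding unitary_group_def by auto
  have VU: "?V * U = 1\<^sub>m n"
    using mat_mult_left_right_inverse[OF Uc _ UV] Uc by auto
  have columns_orthonormal:
    "(\<Sum>i<n. cnj (U $$ (i,k)) * U $$ (i,j)) = (if k = j then 1 else 0)" if "k < n" "j < n" for k j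
  proof -
    have "(?V * U) $$ (k,j) = (\<Sum>i<n. cnj (U $$ (i,k)) * U $$ (i,j))"
      using that Uc by (simp add: scalar_prod_def row_def col_def lessThan_atLeast0)
    then show ?thesis using VU that by simp
  qed
  have Uxi: "(U *\<^sub>v x) $ i = (\<Sum>j<n. U $$ (i,j) * x $ j)" if "i < n" for i
    using that Uc x by (simp add: scalar_prod_def row_def lessThan_atLeast0)
  have "complex_of_real ((vnorm (U *\<^sub>v x))^2) = (\<Sum>i<n. (U *\<^sub>v x) $ i * cnj ((U *\<^sub>v x) $ i))"
    unfolding vnorm_sq of_real_sum complex_norm_square using Uc by simp
  also have "\<dots> = (\<Sum>i<n. \<Sum>j<n. \<Sum>k<n. (U $$ (i,j) * x $ j) * cnj (U $$ (i,k) * x $ k))"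
    by (rule sum.cong, simp, simp add: Uxi sum_distrib_left sum_distrib_right cnj_sum, rule sum.swap)
  also have "\<dots> = (\<Sum>j<n. \<Sum>k<n. \<Sum>i<n. (U $$ (i,j) * x $ j) * cnj (U $$ (i,k) * x $ k))"
    by (subst sum.swap, rule sum.cong[OF refl], rule sum.swap)
  also have "\<dots> = (\<Sum>j<n. \<Sum>k<n. x $ j * cnj (x $ k) * (\<Sum>i<n. cnj (U $$ (i,k)) * U $$ (i,j)))"
    by (simp add: sum_distrib_left mult_ac)
  also have "\<dots> = (\<Sum>j<n. \<Sum>k<n. if k = j then x $ j * cnj (x $ k) else 0)"
    by (intro sum.cong refl) (simp add: columns_orthonormal)
  also have "\<dots> = (\<Sum>j<n. x $ j * cnj (x $ j))" by simp
  also have "\<dots> = complex_of_real ((vnorm x)^2)"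
    unfolding vnorm_sq of_real_sum complex_norm_square using x by simp
  finally have "(vnorm (U *\<^sub>v x))^2 = (vnorm x)^2"
    using of_real_eq_iff by blast
  then show ?thesis using vnorm_ge0 by (simp add: power2_eq_iff_nonneg)
qed

lemma vnorm_diff_le2:
  assumes "dim_vec a = dim_vec b" "vnorm a = 1" "vnorm b = 1"
  shows "vnorm (a - b) \<le> 2"
proof -
  have "(vnorm (a - b))^2 = (\<Sum>i<dim_vec a. (cmod (a $ i - b $ i))^2)"
    using assms by (simp add: vnorm_sq)
  also have "\<dots> \<le> (\<Sum>i<dim_vec a. 2 * (cmod (a $ i))^2 + 2 * (cmod (b $ i))^2)"
  proof (rule sum_mono)
    fix i
    have "(cmod (a $ i - b $ i))^2 \<le> (cmod (a $ i) + cmod (b $ i))^2"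
      by (simp add: power_mono norm_triangle_ineq4)
    also have "\<dots> \<le> 2 * (cmod (a $ i))^2 + 2 * (cmod (b $ i))^2"
      using zero_le_square[of "cmod (a $ i) - cmod (b $ i)"]
      by (simp add: power2_eq_square algebra_simps)
    finally show "(cmod (a $ i - b $ i))^2 \<le> 2 * (cmod (a $ i))^2 + 2 * (cmod (b $ i))^2" .
  qed
  also have "\<dots> = 2 * (vnorm a)^2 + 2 * (vnorm b)^2"
    using assms(1) by (simp add: vnorm_sq sum.distrib sum_distrib_left)
  also have "\<dots> = 2^2" using assms by simp
  finally show ?thesis by (rule power2_le_imp_le) simp
qed

lemma one_unitary: "1\<^sub>m n \<in> unitary_group n"
  unfolding unitary_group_def by (auto intro!: eq_matI)

lemma opnorm_unitary_diff_bounds: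
  assumes n: "n \<ge> 1" and U: "U \<in> unitary_group n" and V: "V \<in> unitary_group n"
  shows "0 \<le> opnorm n (U - V) \<and> opnorm n (U - V) \<le> 2"
proof -
  let ?S = "{vnorm ((U - V) *\<^sub>v x) | x. x \<in> carrier_vec n \<and> vnorm x = 1}"
  have Uc: "U \<in> carrier_mat n n" and Vc: "V \<in> carrier_mat n n"
    using U V unfolding unitary_group_def by auto
  define e where "e = (unit_vec n 0 :: complex vec)"
  have "(\<Sum>i<n. (cmod (e $ i))^2) = (\<Sum>i<n. if i = 0 then 1 else 0)"
    by (rule sum.cong) (auto simp: e_def)
  then have "vnorm e = 1" using n unfolding vnorm_def e_def by simp
  then have ne: "?S \<noteq> {}" unfolding e_def by fastforce
  have S_bounds: "0 \<le> y \<and> y \<le> 2" if "y \<in> ?S" for y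
  proof -
    from that obtain x where x: "x \<in> carrier_vec n" "vnorm x = 1"
      and y: "y = vnorm ((U - V) *\<^sub>v x)" by blast
    have "(U - V) *\<^sub>v x = U *\<^sub>v x - V *\<^sub>v x"
      using minus_mult_distrib_mat_vec[OF Uc Vc x(1)] .
    then show ?thesis
      using y vnorm_ge0 vnorm_diff_le2 unitary_iso[OF U x(1)] unitary_iso[OF V x(1)] x Uc Vc
      by simp
  qed
  obtain y where "y \<in> ?S" using ne by blast
  moreover have "bdd_above ?S" unfolding bdd_above_def using S_bounds by blast
  ultimately have "y \<le> Sup ?S" by (rule cSup_upper)
  moreover have "Sup ?S \<le> 2" by (rule cSup_least[OF ne]) (use S_bounds in blast)
  ultimately show ?thesis using S_bounds \<open>y \<in> ?S\<close> unfolding opnorm_def by force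
qed

lemma map_dist_bounds:
  assumes G: "group G" and n: "n \<ge> 1" and mu: "\<mu> \<in> carrier G \<rightarrow> unitary_group n"
    and nu: "\<nu> \<in> carrier G \<rightarrow> unitary_group n"
  shows "0 \<le> map_dist G n \<mu> \<nu> \<and> map_dist G n \<mu> \<nu> \<le> 2"
proof -
  let ?S = "{opnorm n (\<mu> g - \<nu> g) | g. g \<in> carrier G}"
  have S_bounds: "0 \<le> y \<and> y \<le> 2" if "y \<in> ?S" for y
    using that opnorm_unitary_diff_bounds[OF n] mu nu by blast
  have "\<one>\<^bsub>G\<^esub> \<in> carrier G" using G by (simp add: group.is_monoid monoid.one_closed)
  then obtain y where y: "y \<in> ?S" by blast
  moreover have "bdd_above ?S" unfolding bdd_above_def using S_bounds by blast
  ultimately have "y \<le> Sup ?S" by (rule cSup_upper)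
  moreover have "Sup ?S \<le> 2" by (rule cSup_least) (use y S_bounds in blast)+
  ultimately show ?thesis using S_bounds y unfolding map_dist_def by force
qed

lemma opnorm_le_map_dist:
  assumes n: "n \<ge> 1" and mu: "\<mu> \<in> carrier G \<rightarrow> unitary_group n"
    and nu: "\<nu> \<in> carrier G \<rightarrow> unitary_group n" and g: "g \<in> carrier G"
  shows "opnorm n (\<mu> g - \<nu> g) \<le> map_dist G n \<mu> \<nu>"
  unfolding map_dist_def
proof (rule cSup_upper)
  show "bdd_above {opnorm n (\<mu> g - \<nu> g) | g. g \<in> carrier G}"
    unfolding bdd_above_def using opnorm_unitary_diff_bounds[OF n] mu nu by blast
qed (use g in blast)

lemma trivial_hom: "(\<lambda>g. 1\<^sub>m n) \<in> unitary_homs G n"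
  unfolding unitary_homs_def using one_unitary by auto

lemma dist_to_homs_le_2:
  assumes G: "group G" and n: "n \<ge> 1" and mu: "\<mu> \<in> carrier G \<rightarrow> unitary_group n"
  shows "dist_to_homs G n \<mu> \<le> 2"
proof -
  let ?S = "{map_dist G n \<mu> \<nu> | \<nu>. \<nu> \<in> unitary_homs G n}"
  have S_bounds: "0 \<le> y \<and> y \<le> 2" if "y \<in> ?S" for y
    using that map_dist_bounds[OF G n mu] unfolding unitary_homs_def by blast
  have trivial: "map_dist G n \<mu> (\<lambda>g. 1\<^sub>m n) \<in> ?S" using trivial_hom by blast
  have "bdd_below ?S" unfolding bdd_below_def using S_bounds by blast
  then have "Inf ?S \<le> map_dist G n \<mu> (\<lambda>g. 1\<^sub>m n)" using trivial by (rule cInf_lower[rotated])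
  then show ?thesis using S_bounds trivial unfolding dist_to_homs_def by force
qed

lemma admissible_maps_mono:
  "d1 \<le> d2 \<Longrightarrow> admissible_maps G n d1 \<subseteq> admissible_maps G n d2"
  unfolding admissible_maps_def by auto

lemma bdd_above_dist_admissible:
  assumes "group G"
  shows "bdd_above (\<Union>n\<in>{1..}. dist_to_homs G n ` admissible_maps G n d)"
  unfolding bdd_above_def admissible_maps_def using dist_to_homs_le_2[OF assms] by fastforce

section \<open>The group U(1) as 1x1 matrices\<close>

definition mat1 :: "complex \<Rightarrow> complex mat" where
  "mat1 z = mat 1 1 (\<lambda>_. z)"

lemma mat1_00 [simp]: "mat1 a $$ (0,0) = a"
  unfolding mat1_def by simp

lemma mat1_one: "mat1 1 = 1\<^sub>m 1"
  unfolding mat1_def by (auto intro!: eq_matI)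

lemma mat1_diff: "mat1 a - mat1 b = mat1 (a - b)"
  unfolding mat1_def by (auto intro!: eq_matI)

lemma mat1_mult: "mat1 a * mat1 b = mat1 (a * b)"
  unfolding mat1_def by (auto intro!: eq_matI simp: scalar_prod_def row_def col_def)

lemma mat1_unitary: "cmod z = 1 \<Longrightarrow> mat1 z \<in> unitary_group 1"
  unfolding unitary_group_def mat1_def
  by (auto intro!: eq_matI simp: scalar_prod_def row_def col_def complex_norm_square[symmetric])

lemma unitary1:
  assumes "U \<in> unitary_group 1"
  shows "U = mat1 (U $$ (0,0))" "cmod (U $$ (0,0)) = 1"
proof -
  have Uc: "U \<in> carrier_mat 1 1" and UV: "U * map_mat cnj (transpose_mat U) = 1\<^sub>m 1"
    using assms unfolding unitary_group_def by auto
  show "U = mat1 (U $$ (0,0))" unfolding mat1_def using Uc by (auto intro!: eq_matI)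
  have "(U * map_mat cnj (transpose_mat U)) $$ (0,0) = 1" using UV by simp
  then have "U $$ (0,0) * cnj (U $$ (0,0)) = 1" using Uc by (simp add: scalar_prod_def row_def col_def)
  then have "complex_of_real ((cmod (U $$ (0,0)))^2) = 1" by (simp only: complex_norm_square)
  then have "(cmod (U $$ (0,0)))^2 = 1" using of_real_eq_1_iff by blast
  then show "cmod (U $$ (0,0)) = 1" using norm_ge_zero[of "U $$ (0,0)"] by (simp add: power2_eq_1_iff)
qed

lemma opnorm_mat1: "opnorm 1 (mat1 a) = cmod a"
proof -
  have "{vnorm (mat1 a *\<^sub>v x) | x. x \<in> carrier_vec 1 \<and> vnorm x = 1} = {cmod a}"
  proof (intro equalityI subsetI)
    fix y assume "y \<in> {vnorm (mat1 a *\<^sub>v x) | x. x \<in> carrier_vec 1 \<and> vnorm x = 1}"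
    then obtain x where x: "x \<in> carrier_vec 1" "vnorm x = 1" and y: "y = vnorm (mat1 a *\<^sub>v x)"
      by blast
    have "cmod (x $ 0) = 1" using x unfolding vnorm_def by simp
    then show "y \<in> {cmod a}" using x y unfolding vnorm_def mat1_def
      by (simp add: scalar_prod_def row_def norm_mult)
  next
    fix y assume "y \<in> {cmod a}"
    moreover have "vec 1 (\<lambda>_. 1) \<in> carrier_vec 1 \<and> vnorm (vec 1 (\<lambda>_. 1 :: complex)) = 1"
      unfolding vnorm_def by simp
    moreover have "vnorm (mat1 a *\<^sub>v vec 1 (\<lambda>_. 1)) = cmod a"
      unfolding vnorm_def mat1_def by (simp add: scalar_prod_def row_def)
    ultimately show "y \<in> {vnorm (mat1 a *\<^sub>v x) | x. x \<in> carrier_vec 1 \<and> vnorm x = 1}"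
      by force
  qed
  then show ?thesis unfolding opnorm_def by simp
qed

lemma unitary_hom1_character:
  assumes "\<nu> \<in> unitary_homs G 1"
  defines "z \<equiv> \<lambda>g. \<nu> g $$ (0,0)"
  shows "\<And>g. g \<in> carrier G \<Longrightarrow> \<nu> g = mat1 (z g) \<and> cmod (z g) = 1"
    and "\<And>x y. x \<in> carrier G \<Longrightarrow> y \<in> carrier G \<Longrightarrow> z (x \<otimes>\<^bsub>G\<^esub> y) = z x * z y"
proof -
  have U: "\<nu> g \<in> unitary_group 1" if "g \<in> carrier G" for g
    using assms(1) that unfolding unitary_homs_def by auto
  show char: "\<nu> g = mat1 (z g) \<and> cmod (z g) = 1" if "g \<in> carrier G" for g
    using unitary1[OF U[OF that]] unfolding z_def by simp
  fix x y assume xy: "x \<in> carrier G" "y \<in> carrier G"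
  have "\<nu> (x \<otimes>\<^bsub>G\<^esub> y) = \<nu> x * \<nu> y" using assms(1) xy unfolding unitary_homs_def by auto
  then have "\<nu> (x \<otimes>\<^bsub>G\<^esub> y) = mat1 (z x * z y)" using char xy by (simp add: mat1_mult)
  then show "z (x \<otimes>\<^bsub>G\<^esub> y) = z x * z y" unfolding z_def by simp
qed

section \<open>Phases on the unit circle\<close>

lemma cis_minus_one_le: "cmod (cis x - 1) \<le> \<bar>x\<bar>"
proof -
  have "(cmod (cis x - 1))^2 = (cos x - 1)^2 + (sin x)^2" by (simp add: cmod_power2)
  also have "\<dots> = 4 * (sin (x/2))^2"
    using sin_cos_squared_add[of x] cos_double_sin[of "x/2"]
    by (simp add: power2_eq_square algebra_simps)
  also have "\<dots> \<le> 4 * (x/2)^2"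
    using abs_le_square_iff[THEN iffD1, OF abs_sin_x_le_abs_x[of "x/2"]] by simp
  also have "\<dots> = \<bar>x\<bar>^2" by (simp add: power2_eq_square)
  finally show ?thesis by (rule power2_le_imp_le) simp
qed

lemma cis_defect: "cmod (cis a - cis b * cis c) \<le> \<bar>a - b - c\<bar>"
proof -
  have "cis a - cis b * cis c = cis (b + c) * (cis (a - b - c) - 1)"
    by (simp add: cis_mult algebra_simps)
  then have "cmod (cis a - cis b * cis c) = cmod (cis (a - b - c) - 1)" by (simp add: norm_mult)
  then show ?thesis using cis_minus_one_le by simp
qed

lemma unit_near_one_arg:
  assumes w: "cmod w = 1" and ws: "cmod (w - 1) \<le> s" and s: "0 \<le> s" "s \<le> 2"
  shows "\<exists>t. w = cis t \<and> \<bar>t\<bar> \<le> arccos (1 - s^2/2)"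
proof -
  define y where "y = Re w"
  have sq: "y^2 + (Im w)^2 = 1" using w cmod_power2[of w] unfolding y_def by simp
  have y1: "\<bar>y\<bar> \<le> 1" using abs_Re_le_cmod[of w] w unfolding y_def by simp
  have "(cmod (w - 1))^2 = (y - 1)^2 + (Im w)^2" unfolding y_def by (simp add: cmod_power2)
  also have "\<dots> = 2 - 2*y" using sq by (simp add: power2_eq_square algebra_simps)
  finally have "(cmod (w - 1))^2 = 2 - 2*y" .
  moreover have "(cmod (w - 1))^2 \<le> s^2" using power_mono[OF ws norm_ge_zero, of 2] .
  ultimately have ylow: "1 - s^2/2 \<le> y" by simp
  have "s^2 \<le> 2^2" using power_mono[OF s(2) s(1), of 2] .
  then have t0le: "arccos y \<le> arccos (1 - s^2/2)"
    by (intro arccos_le_arccos) (use ylow y1 in auto)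
  have "sin (arccos y) = sqrt (1 - y^2)" using sin_arccos_abs y1 by simp
  also have "1 - y^2 = (Im w)^2" using sq by simp
  finally have sinv: "sin (arccos y) = \<bar>Im w\<bar>" by simp
  define t where "t = (if Im w \<ge> 0 then arccos y else - arccos y)"
  have "Re (cis t) = Re w" using y1 unfolding t_def y_def by simp
  moreover have "Im (cis t) = Im w" using sinv unfolding t_def by auto
  ultimately have "w = cis t" by (simp add: complex_eqI)
  moreover have "\<bar>t\<bar> \<le> arccos (1 - s^2/2)"
    using t0le arccos_lbound[of y] y1 by (auto simp: t_def)
  ultimately show ?thesis by blast
qed

lemma near_phase:
  assumes z: "cmod z = 1" and close: "cmod (cis a - z) \<le> s" and s: "0 \<le> s" "s \<le> 2"
  shows "\<exists>\<phi>. z = cis \<phi> \<and> \<bar>a - \<phi>\<bar> \<le> arccos (1 - s^2/2)"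
proof -
  have "z * cis (- a) - 1 = (z - cis a) * cis (- a)"
    by (simp add: algebra_simps cis_mult)
  then have "cmod (z * cis (- a) - 1) = cmod (cis a - z)"
    by (simp add: norm_mult norm_minus_commute)
  then obtain t where t: "z * cis (- a) = cis t" "\<bar>t\<bar> \<le> arccos (1 - s^2/2)"
    using unit_near_one_arg[of "z * cis (- a)" s] z close s by (auto simp: norm_mult)
  have "z = cis (a + t)"
    using arg_cong[OF t(1), of "\<lambda>u. u * cis a"] by (simp add: cis_mult mult.assoc) (simp add: add.commute)
  then show ?thesis using t(2) by (intro exI[of _ "a + t"]) simp
qed

lemma cis_eq_one_small:
  assumes "cis r = 1" and "\<bar>r\<bar> < 2*pi"
  shows "r = 0"
proof -
  have "cos r = 1" using arg_cong[OF assms(1), of Re] by simp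
  then obtain n :: int where n: "r = real_of_int n * 2 * pi"
    using cos_one_2pi_int by blast
  then have "\<bar>real_of_int n\<bar> * (2*pi) < 1 * (2*pi)" using assms(2) by (simp add: abs_mult)
  then have "\<bar>real_of_int n\<bar> < 1" by (rule mult_right_less_imp_less) (use pi_gt_zero in simp)
  then show ?thesis using n by simp
qed

lemma arccos_deviation_lt:
  assumes "0 \<le> s" "s < sqrt 3"
  shows "arccos (1 - s^2/2) < 2*pi/3"
proof -
  have s2: "s^2 < 3" using power_strict_mono[OF assms(2) assms(1), of 2] by simp
  have "arccos (1 - s^2/2) < arccos (-1/2)"
    by (rule arccos_less_arccos) (use s2 in auto)
  also have "arccos (-1/2) = pi - pi/3"
    using arccos_minus[of "1/2"] arccos_cos[of "pi/3"] cos_60 by simp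
  finally show ?thesis by simp
qed

section \<open>Quasimorphisms\<close>

definition quasimorphism :: "('g, 'b) monoid_scheme \<Rightarrow> ('g \<Rightarrow> real) \<Rightarrow> real \<Rightarrow> bool" where
  "quasimorphism G F D \<longleftrightarrow>
     (\<forall>g\<in>carrier G. \<forall>h\<in>carrier G. \<bar>F (g \<otimes>\<^bsub>G\<^esub> h) - F g - F h\<bar> \<le> D)"

definition additive_on :: "('g, 'b) monoid_scheme \<Rightarrow> ('g \<Rightarrow> real) \<Rightarrow> bool" where
  "additive_on G \<phi> \<longleftrightarrow> (\<forall>g\<in>carrier G. \<forall>h\<in>carrier G. \<phi> (g \<otimes>\<^bsub>G\<^esub> h) = \<phi> g + \<phi> h)"

definition trivial_quasimorphism :: "('g, 'b) monoid_scheme \<Rightarrow> ('g \<Rightarrow> real) \<Rightarrow> bool" where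
  "trivial_quasimorphism G F \<longleftrightarrow>
     (\<exists>b \<phi>. bounded_cochain1 G b \<and> additive_on G \<phi> \<and> (\<forall>g\<in>carrier G. F g = b g + \<phi> g))"

lemma quasimorphism_defect_nonneg:
  assumes "group G" "quasimorphism G F D"
  shows "0 \<le> D"
proof -
  have "\<one>\<^bsub>G\<^esub> \<in> carrier G" using assms(1) by (simp add: group.is_monoid monoid.one_closed)
  then show ?thesis using assms(2) unfolding quasimorphism_def by force
qed

lemma quasimorphism_scale:
  assumes "quasimorphism G F D" "0 \<le> c"
  shows "quasimorphism G (\<lambda>g. c * F g) (c * D)"
  unfolding quasimorphism_def
proof (intro ballI)
  fix g h assume "g \<in> carrier G" "h \<in> carrier G"
  then have "\<bar>F (g \<otimes>\<^bsub>G\<^esub> h) - F g - F h\<bar> \<le> D" using assms(1) unfolding quasimorphism_def by blast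
  then have "c * \<bar>F (g \<otimes>\<^bsub>G\<^esub> h) - F g - F h\<bar> \<le> c * D" using assms(2) by (rule mult_left_mono)
  then show "\<bar>c * F (g \<otimes>\<^bsub>G\<^esub> h) - c * F g - c * F h\<bar> \<le> c * D"
    using assms(2) by (simp add: abs_mult right_diff_distrib[symmetric])
qed

lemma trivial_quasimorphism_unscale:
  assumes "trivial_quasimorphism G (\<lambda>g. c * F g)" "c \<noteq> 0"
  shows "trivial_quasimorphism G F"
proof -
  obtain b \<phi> B where b: "\<forall>g\<in>carrier G. \<bar>b g\<bar> \<le> B" and \<phi>: "additive_on G \<phi>"
    and dec: "\<forall>g\<in>carrier G. c * F g = b g + \<phi> g"
    using assms(1) unfolding trivial_quasimorphism_def bounded_cochain1_def by blast
  have "bounded_cochain1 G (\<lambda>g. b g / c)"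
    unfolding bounded_cochain1_def
    using b assms(2) by (intro exI[of _ "B / \<bar>c\<bar>"]) (auto simp: divide_right_mono)
  moreover have "additive_on G (\<lambda>g. \<phi> g / c)"
    using \<phi> unfolding additive_on_def by (simp add: add_divide_distrib)
  moreover have "\<forall>g\<in>carrier G. F g = b g / c + \<phi> g / c"
    using dec assms(2) by (simp add: add_divide_distrib[symmetric] field_simps)
  ultimately show ?thesis unfolding trivial_quasimorphism_def by blast
qed

text \<open>A non-injective comparison map in degree 2 produces a nontrivial quasimorphism: the
  bounded cocycle is the coboundary of some f, and f (normalised at the identity) has
  bounded defect but is not a bounded perturbation of a homomorphism, for otherwise the
  bounded part would be a bounded primitive of the cocycle.\<close>

lemma nontrivial_quasimorphism_from_comparison:
  assumes G: "group G" and "comparison2_not_injective G"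
  obtains F D where "quasimorphism G F D" "F \<one>\<^bsub>G\<^esub> = 0" "\<not> trivial_quasimorphism G F"
proof -
  have one: "\<one>\<^bsub>G\<^esub> \<in> carrier G" and one_one: "\<one>\<^bsub>G\<^esub> \<otimes>\<^bsub>G\<^esub> \<one>\<^bsub>G\<^esub> = \<one>\<^bsub>G\<^esub>"
    using G by (simp_all add: group.is_monoid monoid.one_closed)
  obtain c f B where f: "\<And>g h. g \<in> carrier G \<Longrightarrow> h \<in> carrier G \<Longrightarrow> c g h = f h - f (g \<otimes>\<^bsub>G\<^esub> h) + f g"
    and B: "\<And>g h. g \<in> carrier G \<Longrightarrow> h \<in> carrier G \<Longrightarrow> \<bar>c g h\<bar> \<le> B"
    and no_bounded_primitive: "\<not> (\<exists>f. bounded_cochain1 G f \<and> is_coboundary_of G c f)"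
    using assms(2) unfolding comparison2_not_injective_def bounded_cochain2_def
      is_coboundary_of_def coboundary1_def by blast
  define F where "F g = f g - f \<one>\<^bsub>G\<^esub>" for g
  have "F (g \<otimes>\<^bsub>G\<^esub> h) - F g - F h = c \<one>\<^bsub>G\<^esub> \<one>\<^bsub>G\<^esub> - c g h"
    if "g \<in> carrier G" "h \<in> carrier G" for g h
    unfolding F_def f[OF that] f[OF one one] one_one by simp
  then have "quasimorphism G F (2 * B)"
    unfolding quasimorphism_def using B one by (smt (verit))
  moreover have "\<not> trivial_quasimorphism G F"
  proof
    assume "trivial_quasimorphism G F"
    then obtain b \<phi> where b: "bounded_cochain1 G b" and \<phi>: "additive_on G \<phi>"
      and dec: "\<forall>g\<in>carrier G. F g = b g + \<phi> g"
      unfolding trivial_quasimorphism_def by blast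
    define f' where "f' g = b g + f \<one>\<^bsub>G\<^esub>" for g
    have "bounded_cochain1 G f'"
      using b unfolding bounded_cochain1_def f'_def by (metis abs_triangle_ineq add_mono order_refl order_trans)
    moreover have "is_coboundary_of G c f'"
      unfolding is_coboundary_of_def coboundary1_def
    proof (intro ballI)
      fix g h assume gh: "g \<in> carrier G" "h \<in> carrier G"
      have gh_closed: "g \<otimes>\<^bsub>G\<^esub> h \<in> carrier G" using G gh by (simp add: group.is_monoid monoid.m_closed)
      have f_dec: "f x = f' x + \<phi> x" if "x \<in> carrier G" for x
        using dec that unfolding F_def f'_def by force
      show "c g h = f' h - f' (g \<otimes>\<^bsub>G\<^esub> h) + f' g"
        using f[OF gh] f_dec[OF gh(1)] f_dec[OF gh(2)] f_dec[OF gh_closed] \<phi> gh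
        unfolding additive_on_def by simp
    qed
    ultimately show False using no_bounded_primitive by blast
  qed
  moreover have "F \<one>\<^bsub>G\<^esub> = 0" unfolding F_def by simp
  ultimately show ?thesis using that by blast
qed

lemma exp_quasimorphism_admissible:
  assumes G: "group G" and a: "quasimorphism G a \<eta>" and a1: "a \<one>\<^bsub>G\<^esub> = 0"
  shows "(\<lambda>g. mat1 (cis (a g))) \<in> admissible_maps G 1 \<eta>"
proof -
  let ?\<mu> = "\<lambda>g. mat1 (cis (a g))"
  have "map_defect G 1 ?\<mu> \<le> \<eta>"
    unfolding map_defect_def
  proof (rule cSup_least)
    have "\<one>\<^bsub>G\<^esub> \<in> carrier G" using G by (simp add: group.is_monoid monoid.one_closed)
    then show "{opnorm 1 (?\<mu> (x \<otimes>\<^bsub>G\<^esub> y) - ?\<mu> x * ?\<mu> y) | x y. x \<in> carrier G \<and> y \<in> carrier G} \<noteq> {}"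
      by blast
  next
    fix d assume "d \<in> {opnorm 1 (?\<mu> (x \<otimes>\<^bsub>G\<^esub> y) - ?\<mu> x * ?\<mu> y) | x y. x \<in> carrier G \<and> y \<in> carrier G}"
    then obtain x y where xy: "x \<in> carrier G" "y \<in> carrier G"
      and d0: "d = opnorm 1 (?\<mu> (x \<otimes>\<^bsub>G\<^esub> y) - ?\<mu> x * ?\<mu> y)" by blast
    have d: "d = cmod (cis (a (x \<otimes>\<^bsub>G\<^esub> y)) - cis (a x) * cis (a y))"
      using d0 unfolding mat1_mult mat1_diff opnorm_mat1 .
    have "d \<le> \<bar>a (x \<otimes>\<^bsub>G\<^esub> y) - a x - a y\<bar>" unfolding d by (rule cis_defect)
    also have "\<dots> \<le> \<eta>" using a xy unfolding quasimorphism_def by blast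
    finally show "d \<le> \<eta>" .
  qed
  then show ?thesis
    unfolding admissible_maps_def using mat1_unitary a1 by (simp add: mat1_one)
qed

text \<open>Rigidity: if cis of a quasimorphism a of defect \<eta> is uniformly within s of a character
  z, then a is trivial provided \<eta> + 3 arccos(1 - s^2/2) < 2 pi.  Indeed z = cis(\<phi>) with
  |a - \<phi>| bounded, and the defect of \<phi> is a multiple of 2 pi of absolute value < 2 pi.\<close>

lemma quasimorphism_near_character_trivial:
  assumes G: "group G" and a: "quasimorphism G a \<eta>"
    and z_unit: "\<And>g. g \<in> carrier G \<Longrightarrow> cmod (z g) = 1"
    and z_mult: "\<And>x y. x \<in> carrier G \<Longrightarrow> y \<in> carrier G \<Longrightarrow> z (x \<otimes>\<^bsub>G\<^esub> y) = z x * z y"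
    and close: "\<And>g. g \<in> carrier G \<Longrightarrow> cmod (cis (a g) - z g) \<le> s"
    and s: "0 \<le> s" "s \<le> 2" and small: "\<eta> + 3 * arccos (1 - s^2/2) < 2*pi"
  shows "trivial_quasimorphism G a"
proof -
  let ?\<alpha> = "arccos (1 - s^2/2)"
  define \<phi> where "\<phi> g = (SOME \<phi>. z g = cis \<phi> \<and> \<bar>a g - \<phi>\<bar> \<le> ?\<alpha>)" for g
  have \<phi>: "z g = cis (\<phi> g) \<and> \<bar>a g - \<phi> g\<bar> \<le> ?\<alpha>" if "g \<in> carrier G" for g
    unfolding \<phi>_def by (rule someI_ex, rule near_phase) (use that z_unit close s in auto)
  have "additive_on G \<phi>"
    unfolding additive_on_def
  proof (intro ballI)
    fix x y assume xy: "x \<in> carrier G" "y \<in> carrier G"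
    have xy_closed: "x \<otimes>\<^bsub>G\<^esub> y \<in> carrier G" using G xy by (simp add: group.is_monoid monoid.m_closed)
    let ?r = "\<phi> (x \<otimes>\<^bsub>G\<^esub> y) - \<phi> x - \<phi> y"
    have "cis (\<phi> (x \<otimes>\<^bsub>G\<^esub> y)) = cis (\<phi> x) * cis (\<phi> y)"
      using \<phi> z_mult xy xy_closed by metis
    then have "cis ?r = 1" by (simp add: cis_divide[symmetric] cis_mult)
    moreover have "\<bar>?r\<bar> \<le> \<eta> + 3 * ?\<alpha>"
      using a xy \<phi>[OF xy(1)] \<phi>[OF xy(2)] \<phi>[OF xy_closed] unfolding quasimorphism_def by force
    ultimately show "\<phi> (x \<otimes>\<^bsub>G\<^esub> y) = \<phi> x + \<phi> y"
      using cis_eq_one_small small by force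
  qed
  moreover have "bounded_cochain1 G (\<lambda>g. a g - \<phi> g)"
    unfolding bounded_cochain1_def using \<phi> by blast
  ultimately show ?thesis unfolding trivial_quasimorphism_def by force
qed

lemma small_scale_exists:
  fixes D \<delta> \<beta> :: real
  assumes "0 \<le> D" "0 < \<delta>" "0 < \<beta>"
  shows "\<exists>c>0. c * D \<le> \<delta> \<and> c * D < \<beta>"
proof -
  define c where "c = min \<delta> \<beta> / (D + 1)"
  have c: "0 < c" "c * (D + 1) = min \<delta> \<beta>" using assms unfolding c_def by auto
  moreover have "c * D < c * (D + 1)" using c(1) by simp
  ultimately have "c * D < min \<delta> \<beta>" by simp
  then show ?thesis using c(1) by auto
qed

lemma far_from_homs:
  assumes G: "group G" and F: "quasimorphism G F D" "F \<one>\<^bsub>G\<^esub> = 0"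
    and nontrivial: "\<not> trivial_quasimorphism G F"
    and \<delta>: "0 < \<delta>" and s: "0 \<le> s" "s < sqrt 3"
  shows "\<exists>\<mu>\<in>admissible_maps G 1 \<delta>. s \<le> dist_to_homs G 1 \<mu>"
proof -
  let ?\<alpha> = "arccos (1 - s^2/2)"
  have "sqrt 3 < 2" by (rule real_less_lsqrt) simp_all
  then have s2: "s \<le> 2" using s(2) by linarith
  have "0 < 2*pi - 3 * ?\<alpha>" using arccos_deviation_lt[OF s] by simp
  then obtain c where c: "0 < c" "c * D \<le> \<delta>" "c * D < 2*pi - 3 * ?\<alpha>"
    using small_scale_exists quasimorphism_defect_nonneg[OF G F(1)] \<delta> by blast
  define \<mu> where "\<mu> g = mat1 (cis (c * F g))" for g
  have cF: "quasimorphism G (\<lambda>g. c * F g) \<delta>"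
    using quasimorphism_scale[OF F(1), of c] c(1,2) unfolding quasimorphism_def by fastforce
  have adm: "\<mu> \<in> admissible_maps G 1 \<delta>"
    unfolding \<mu>_def using exp_quasimorphism_admissible[OF G cF] F(2) by simp
  have \<mu>U: "\<mu> \<in> carrier G \<rightarrow> unitary_group 1" using adm unfolding admissible_maps_def by blast
  have far: "s \<le> map_dist G 1 \<mu> \<nu>" if \<nu>: "\<nu> \<in> unitary_homs G 1" for \<nu>
  proof (rule ccontr)
    assume "\<not> s \<le> map_dist G 1 \<mu> \<nu>"
    define z where "z g = \<nu> g $$ (0,0)" for g
    note char = unitary_hom1_character[OF \<nu>, folded z_def]
    have \<nu>U: "\<nu> \<in> carrier G \<rightarrow> unitary_group 1" using \<nu> unfolding unitary_homs_def by blast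
    have "cmod (cis (c * F g) - z g) \<le> s" if g: "g \<in> carrier G" for g
    proof -
      have \<nu>g: "\<nu> g = mat1 (z g)" using char(1)[OF g] by simp
      have "cmod (cis (c * F g) - z g) = opnorm 1 (\<mu> g - \<nu> g)"
        unfolding \<mu>_def \<nu>g mat1_diff opnorm_mat1 ..
      then show ?thesis
        using opnorm_le_map_dist[OF _ \<mu>U \<nu>U g] \<open>\<not> s \<le> map_dist G 1 \<mu> \<nu>\<close> by simp
    qed
    then have "trivial_quasimorphism G (\<lambda>g. c * F g)"
      using quasimorphism_near_character_trivial[OF G quasimorphism_scale[OF F(1)], of c z s]
        char c s s2 by force
    then show False using trivial_quasimorphism_unscale c(1) nontrivial by blast
  qed
  have "s \<le> dist_to_homs G 1 \<mu>"
    unfolding dist_to_homs_def by (rule cInf_greatest) (use trivial_hom far in blast)+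
  then show ?thesis using adm by blast
qed

section \<open>Limits at 0+ of monotone suprema\<close>

lemma Lim_at_right_mono_ge:
  fixes g :: "real \<Rightarrow> real"
  assumes lb: "\<And>d. 0 < d \<Longrightarrow> a \<le> g d"
    and mono: "\<And>d1 d2. 0 < d1 \<Longrightarrow> d1 \<le> d2 \<Longrightarrow> g d1 \<le> g d2"
  shows "a \<le> Lim (at_right 0) g"
proof -
  define L where "L = Inf (g ` {0<..})"
  have ne: "g ` {0<..} \<noteq> {}" by auto
  have bdd: "bdd_below (g ` {0<..})" unfolding bdd_below_def using lb by auto
  have L_le: "L \<le> g d" if "0 < d" for d
    unfolding L_def by (rule cInf_lower[OF _ bdd]) (use that in auto)
  have "(g \<longlongrightarrow> L) (at_right 0)"
  proof (rule order_tendstoI)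
    fix y assume "y < L"
    have "eventually (\<lambda>x. x \<in> {0<..<(1::real)}) (at_right 0)"
      by (rule eventually_at_right_real) simp
    then show "eventually (\<lambda>x. y < g x) (at_right 0)"
      by (rule eventually_mono) (use L_le \<open>y < L\<close> in force)
  next
    fix y assume "L < y"
    then obtain x0 where x0: "0 < x0" "g x0 < y" using cInf_lessD[OF ne] unfolding L_def by auto
    show "eventually (\<lambda>x. g x < y) (at_right 0)"
      using eventually_at_right_real[OF x0(1)]
      by (rule eventually_mono) (use mono[of _ x0] x0 in force)
  qed
  then have "Lim (at_right 0) g = L" by (rule tendsto_Lim[rotated]) simp
  moreover have "a \<le> L" unfolding L_def by (rule cInf_greatest[OF ne]) (use lb in auto)
  ultimately show ?thesis by simp
qed

lemma Lim_at_right_Sup_ge: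
  fixes S :: "real \<Rightarrow> real set"
  assumes a: "0 < a"
    and mono: "\<And>d1 d2. d1 \<le> d2 \<Longrightarrow> S d1 \<subseteq> S d2"
    and bdd: "\<And>d. bdd_above (S d)"
    and reach: "\<And>d s. 0 < d \<Longrightarrow> 0 \<le> s \<Longrightarrow> s < a \<Longrightarrow> \<exists>x\<in>S d. s \<le> x"
  shows "a \<le> Lim (at_right 0) (\<lambda>d. Sup (S d))"
proof (rule Lim_at_right_mono_ge)
  fix d :: real assume d: "0 < d"
  show "a \<le> Sup (S d)"
  proof (rule dense_le_bounded[OF a])
    fix s assume "0 < s" "s < a"
    then have "\<exists>x\<in>S d. s \<le> x" using reach[OF d] by simp
    then obtain x where "x \<in> S d" "s \<le> x" by blast
    then show "s \<le> Sup (S d)" using cSup_upper[OF _ bdd] by force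
  qed
  fix d2 assume "d \<le> d2"
  have "S d \<noteq> {}" using reach[OF d _ a] by blast
  then show "Sup (S d) \<le> Sup (S d2)"
    using cSup_subset_mono[OF _ bdd mono[OF \<open>d \<le> d2\<close>]] by blast
qed

theorem corollary2p4:
  fixes G :: "('g, 'b) monoid_scheme"
  assumes "group G"
    and "comparison2_not_injective G"
  shows "def_n G 1 \<ge> sqrt 3 \<and> \<not> ulam_stable G"
proof -
  obtain F D where F: "quasimorphism G F D" "F \<one>\<^bsub>G\<^esub> = 0" "\<not> trivial_quasimorphism G F"
    using nontrivial_quasimorphism_from_comparison[OF assms] by blast
  have sqrt3: "0 < sqrt (3::real)" by simp
  let ?S = "\<lambda>n d. dist_to_homs G n ` admissible_maps G n d"
  have S_mono: "?S n d1 \<subseteq> ?S n d2" if "d1 \<le> d2" for n d1 d2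
    using admissible_maps_mono[OF that] by (rule image_mono)
  have reach: "\<exists>x\<in>?S 1 d. s \<le> x" if "0 < d" "0 \<le> s" "s < sqrt 3" for d s
    using far_from_homs[OF assms(1) F that] by blast
  have "sqrt 3 \<le> def_n G 1"
    unfolding def_n_def F_n_def
  proof (rule Lim_at_right_Sup_ge[OF sqrt3 S_mono _ reach])
    show "bdd_above (?S 1 d)" for d
      by (rule bdd_above_mono[OF bdd_above_dist_admissible[OF assms(1)]]) auto
  qed
  moreover have "sqrt 3 \<le> def_fd G"
    unfolding def_fd_def F_fd_def
  proof (rule Lim_at_right_Sup_ge[OF sqrt3 _ bdd_above_dist_admissible[OF assms(1)]])
    show "(\<Union>n\<in>{1..}. ?S n d1) \<subseteq> (\<Union>n\<in>{1..}. ?S n d2)" if "d1 \<le> d2" for d1 d2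
      using S_mono[OF that] by blast
    show "\<exists>x\<in>(\<Union>n\<in>{1..}. ?S n d). s \<le> x" if "0 < d" "0 \<le> s" "s < sqrt 3" for d s
      using reach[OF that] by blast
  qed
  ultimately show ?thesis unfolding ulam_stable_def using sqrt3 by linarith
qed

end
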